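(* Let $P$ be the transition matrix of a reversible and ergodic Markov chain on $V$ with stationary distribution $\pi$ and mixing rate $t^*$. For the billiard router model for $P$, with any initial configuration, $$\left|\chi^{(T)}_w-\mu^{(T)}_w\right|\le\frac{3\pi_w}{\pi_{\min}}\,t^*\,\Delta(\Delta-1)$$ for all $w\in V$ and $T\ge0$.
   Context: Let $V=\{1,\dots,N\}$ and let $P\in\mathbb{R}_{\ge 0}^{N\times N}$ be an ergodic (irreducible, aperiodic) stochastic matrix with stationary distribution $\pi$; $\pi_{\min}=\min_v\pi_v$; reversible means $\pi_uP_{u,v}=\pi_vP_{v,u}$ for all $u,v$. For $v\in V$ let $\mathcal N(v)=\{u: P_{v,u}>0\}$, $\delta(v)=|\mathcal N(v)|$, $\Delta=\max_v\delta(v)$. Total variation distance $d_{TV}(\xi,\zeta)=\frac12\|\xi-\zeta\|_1$; mixing time $\tau(\varepsilon)=\max_{v}\min\{t\ge0: d_{TV}(P^t_{v,\cdot},\pi)\le\varepsilon\}$; mixing rate $t^*=\tau(1/4)$. A functional-router model consists of functions $\sigma_v:\mathbb{Z}_{\ge0}\to\mathcal N(v)$; write $I_{v,u}[z,z')=|\{j\in\{z,\dots,z'-1\}:\sigma_v(j)=u\}|$ (zero if $z'\le z$). Given $\chi^{(0)}\in\mathbb{Z}_{\ge0}^N$, set $Z^{(t)}_{v,u}=I_{v,u}\big[\sum_{s=0}^{t-1}\chi^{(s)}_v,\sum_{s=0}^{t}\chi^{(s)}_v\big)$, $\chi^{(t+1)}_u=\sum_vZ^{(t)}_{v,u}$,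 $\mu^{(0)}=\chi^{(0)}$, $\mu^{(t)}=\mu^{(0)}P^t$. The billiard router is defined recursively: $\sigma_v(i)$ is an element $u\in\mathcal N(v)$ minimizing $(I_{v,u}[0,i)+1)/P_{v,u}$ (ties broken arbitrarily). It is known (billiard sequences) that for this router $|I_{v,u}[z,z')-(z'-z)P_{v,u}|\le 1+(\delta(v)-2)P_{v,u}$ for all $v,u$ and $z'>z\ge0$. *)

theory Defs
  imports "HOL-Analysis.Analysis"
begin

text \<open>State space V = {0..<N}; a matrix is a function nat => nat => real.\<close>

definition stochastic :: "nat \<Rightarrow> (nat \<Rightarrow> nat \<Rightarrow> real) \<Rightarrow> bool" where
  "stochastic N P \<longleftrightarrow> (\<forall>u<N. \<forall>v<N. P u v \<ge> 0) \<and> (\<forall>u<N. (\<Sum>v<N. P u v) = 1)"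

primrec mpow :: "nat \<Rightarrow> (nat \<Rightarrow> nat \<Rightarrow> real) \<Rightarrow> nat \<Rightarrow> nat \<Rightarrow> nat \<Rightarrow> real" where
  "mpow N P 0 u v = (if u = v then 1 else 0)"
| "mpow N P (Suc t) u v = (\<Sum>w<N. mpow N P t u w * P w v)"

definition irreducible_chain :: "nat \<Rightarrow> (nat \<Rightarrow> nat \<Rightarrow> real) \<Rightarrow> bool" where
  "irreducible_chain N P \<longleftrightarrow> (\<forall>u<N. \<forall>v<N. \<exists>t. mpow N P t u v > 0)"

definition aperiodic_chain :: "nat \<Rightarrow> (nat \<Rightarrow> nat \<Rightarrow> real) \<Rightarrow> bool" where
  "aperiodic_chain N P \<longleftrightarrow> (\<forall>v<N. Gcd {t::nat. t \<ge> 1 \<and> mpow N P t v v > 0} = 1)"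

definition ergodic_chain :: "nat \<Rightarrow> (nat \<Rightarrow> nat \<Rightarrow> real) \<Rightarrow> bool" where
  "ergodic_chain N P \<longleftrightarrow> stochastic N P \<and> irreducible_chain N P \<and> aperiodic_chain N P"

definition stationary_dist :: "nat \<Rightarrow> (nat \<Rightarrow> nat \<Rightarrow> real) \<Rightarrow> (nat \<Rightarrow> real) \<Rightarrow> bool" where
  "stationary_dist N P \<pi> \<longleftrightarrow> (\<forall>v<N. \<pi> v \<ge> 0) \<and> (\<Sum>v<N. \<pi> v) = 1 \<and>
     (\<forall>v<N. (\<Sum>u<N. \<pi> u * P u v) = \<pi> v)"

definition reversible_chain :: "nat \<Rightarrow> (nat \<Rightarrow> nat \<Rightarrow> real) \<Rightarrow> (nat \<Rightarrow> real) \<Rightarrow> bool" where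
  "reversible_chain N P \<pi> \<longleftrightarrow> (\<forall>u<N. \<forall>v<N. \<pi> u * P u v = \<pi> v * P v u)"

definition pi_min :: "nat \<Rightarrow> (nat \<Rightarrow> real) \<Rightarrow> real" where
  "pi_min N \<pi> = Min (\<pi> ` {..<N})"

definition nbrs :: "nat \<Rightarrow> (nat \<Rightarrow> nat \<Rightarrow> real) \<Rightarrow> nat \<Rightarrow> nat set" where
  "nbrs N P v = {u. u < N \<and> P v u > 0}"

definition deg :: "nat \<Rightarrow> (nat \<Rightarrow> nat \<Rightarrow> real) \<Rightarrow> nat \<Rightarrow> nat" where
  "deg N P v = card (nbrs N P v)"

definition max_deg :: "nat \<Rightarrow> (nat \<Rightarrow> nat \<Rightarrow> real) \<Rightarrow> nat" where
  "max_deg N P = Max (deg N P ` {..<N})"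

definition dTV :: "nat \<Rightarrow> (nat \<Rightarrow> real) \<Rightarrow> (nat \<Rightarrow> real) \<Rightarrow> real" where
  "dTV N \<xi> \<zeta> = (1/2) * (\<Sum>v<N. \<bar>\<xi> v - \<zeta> v\<bar>)"

definition mixing_time :: "nat \<Rightarrow> (nat \<Rightarrow> nat \<Rightarrow> real) \<Rightarrow> (nat \<Rightarrow> real) \<Rightarrow> real \<Rightarrow> nat" where
  "mixing_time N P \<pi> \<epsilon> =
     Max ((\<lambda>v. LEAST t. dTV N (mpow N P t v) \<pi> \<le> \<epsilon>) ` {..<N})"

definition mixing_rate :: "nat \<Rightarrow> (nat \<Rightarrow> nat \<Rightarrow> real) \<Rightarrow> (nat \<Rightarrow> real) \<Rightarrow> nat" where
  "mixing_rate N P \<pi> = mixing_time N P \<pi> (1/4)"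

text \<open>Functional router: sigma v i is the i-th destination of vertex v.
  I v u [z, z') counts indices j in {z..<z'} with sigma v j = u.\<close>
definition Icount :: "(nat \<Rightarrow> nat \<Rightarrow> nat) \<Rightarrow> nat \<Rightarrow> nat \<Rightarrow> nat \<Rightarrow> nat \<Rightarrow> nat" where
  "Icount \<sigma> v u z z' = card {j. z \<le> j \<and> j < z' \<and> \<sigma> v j = u}"

definition functional_router :: "nat \<Rightarrow> (nat \<Rightarrow> nat \<Rightarrow> real) \<Rightarrow> (nat \<Rightarrow> nat \<Rightarrow> nat) \<Rightarrow> bool" where
  "functional_router N P \<sigma> \<longleftrightarrow> (\<forall>v<N. \<forall>i. \<sigma> v i \<in> nbrs N P v)"

definition billiard_router :: "nat \<Rightarrow> (nat \<Rightarrow> nat \<Rightarrow> real) \<Rightarrow> (nat \<Rightarrow> nat \<Rightarrow> nat) \<Rightarrow> bool" where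
  "billiard_router N P \<sigma> \<longleftrightarrow> functional_router N P \<sigma> \<and>
     (\<forall>v<N. \<forall>i. \<forall>u\<in>nbrs N P v.
        (real (Icount \<sigma> v (\<sigma> v i) 0 i) + 1) / P v (\<sigma> v i)
          \<le> (real (Icount \<sigma> v u 0 i) + 1) / P v u)"

text \<open>Router dynamics. The state at time t is the pair (chi^(t), S^(t)) where
  S^(t) v = sum_{s<t} chi^(s) v.\<close>
primrec router_state :: "nat \<Rightarrow> (nat \<Rightarrow> nat \<Rightarrow> nat) \<Rightarrow> (nat \<Rightarrow> nat) \<Rightarrow> nat
    \<Rightarrow> (nat \<Rightarrow> nat) \<times> (nat \<Rightarrow> nat)" where
  "router_state N \<sigma> \<chi>0 0 = (\<chi>0, (\<lambda>v. 0))"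
| "router_state N \<sigma> \<chi>0 (Suc t) =
     (let c = fst (router_state N \<sigma> \<chi>0 t); S = snd (router_state N \<sigma> \<chi>0 t);
          S' = (\<lambda>v. S v + c v)
      in ((\<lambda>u. \<Sum>v<N. Icount \<sigma> v u (S v) (S' v)), S'))"

definition chi :: "nat \<Rightarrow> (nat \<Rightarrow> nat \<Rightarrow> nat) \<Rightarrow> (nat \<Rightarrow> nat) \<Rightarrow> nat \<Rightarrow> nat \<Rightarrow> nat" where
  "chi N \<sigma> \<chi>0 t = fst (router_state N \<sigma> \<chi>0 t)"

definition mu :: "nat \<Rightarrow> (nat \<Rightarrow> nat \<Rightarrow> real) \<Rightarrow> (nat \<Rightarrow> nat) \<Rightarrow> nat \<Rightarrow> nat \<Rightarrow> real" where
  "mu N P \<chi>0 t w = (\<Sum>v<N. real (\<chi>0 v) * mpow N P t v w)"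

end

theory Submission
  imports Defs
begin

text \<open>
  The router configuration is the idealised linear evolution mu plus the rounding errors
  made in each round: if rounding t v u is the number of tokens actually sent from v to u
  in round t minus the expected number chi(t) v * P v u, then, because the errors of each
  vertex cancel, chi(T) w - mu(T) w = sum over t < T, v, u of
  rounding t v u * (P^(T-1-t) u w - pi w).  The three factors are bounded separately:
  \<^item> billiard sequences are balanced, |rounding t v u| \<le> 1 + (deg v - 2) P v u \<le> Delta - 1,
    and by reversibility every u has at most Delta in-neighbours;
  \<^item> reversibility turns the column deviation sum_u |P^s u w - pi w| into at most
    pi w / pi_min times the row distance d_w(s) = sum_u |P^s w u - pi u|;
  \<^item> d_w is submultiplicative, hence halves every t* steps, so sum_s d_w(s) \<le> 3 t*
    (ergodicity, via a Doeblin contraction, guarantees that t* is attained).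
\<close>

section \<open>Matrix powers of a reversible ergodic chain\<close>

lemma sum_delta_left:
  assumes "u < (N::nat)" shows "(\<Sum>w<N. (if u = w then 1 else 0) * (f w::real)) = f u"
proof -
  have "(\<Sum>w<N. (if u = w then 1 else 0) * f w) = (\<Sum>w<N. if u = w then f w else 0)"
    by (intro sum.cong) auto
  also have "\<dots> = f u" using assms by (subst sum.delta') auto
  finally show ?thesis .
qed

lemma sum_delta_right:
  assumes "u < (N::nat)" shows "(\<Sum>w<N. (f w::real) * (if w = u then 1 else 0)) = f u"
proof -
  have "(\<Sum>w<N. f w * (if w = u then 1 else 0)) = (\<Sum>w<N. if w = u then f w else 0)"
    by (intro sum.cong) auto
  also have "\<dots> = f u" using assms by (subst sum.delta) auto
  finally show ?thesis .
qed

lemma mpow_one: "u < N \<Longrightarrow> mpow N P (Suc 0) u v = P u v"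
  by (simp add: sum_delta_left)

lemma sum_swap_mult:
  "(\<Sum>v\<in>A. (\<Sum>i\<in>B. f i v) * (c v::real)) = (\<Sum>i\<in>B. \<Sum>v\<in>A. f i v * c v)"
  by (simp add: sum_distrib_right) (rule sum.swap)

locale reversible_ergodic_chain =
  fixes N :: nat and P :: "nat \<Rightarrow> nat \<Rightarrow> real" and \<pi> :: "nat \<Rightarrow> real"
  assumes ergodic: "ergodic_chain N P" and stationary: "stationary_dist N P \<pi>"
    and reversible: "reversible_chain N P \<pi>"
begin

lemma P_nonneg: "u < N \<Longrightarrow> v < N \<Longrightarrow> P u v \<ge> 0"
  using ergodic unfolding ergodic_chain_def stochastic_def by blast

lemma P_row: "u < N \<Longrightarrow> (\<Sum>v<N. P u v) = 1"
  using ergodic unfolding ergodic_chain_def stochastic_def by blast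

lemma pi_nonneg: "v < N \<Longrightarrow> \<pi> v \<ge> 0"
  using stationary unfolding stationary_dist_def by blast

lemma pi_sum: "(\<Sum>v<N. \<pi> v) = 1"
  using stationary unfolding stationary_dist_def by blast

lemma pi_stat: "v < N \<Longrightarrow> (\<Sum>u<N. \<pi> u * P u v) = \<pi> v"
  using stationary unfolding stationary_dist_def by blast

lemma P_rev: "u < N \<Longrightarrow> v < N \<Longrightarrow> \<pi> u * P u v = \<pi> v * P v u"
  using reversible unfolding reversible_chain_def by blast

lemma pi_le1: "v < N \<Longrightarrow> \<pi> v \<le> 1"
proof -
  assume v: "v < N"
  have "\<pi> v \<le> (\<Sum>v<N. \<pi> v)" by (rule member_le_sum) (use v pi_nonneg in auto)
  then show ?thesis using pi_sum by simp
qed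

lemma ex_successor: "w < N \<Longrightarrow> \<exists>y<N. P w y > 0"
proof (rule ccontr)
  assume w: "w < N" and "\<not> (\<exists>y<N. P w y > 0)"
  then have "(\<Sum>y<N. P w y) \<le> 0" by (intro sum_nonpos) auto
  then show False using P_row w by simp
qed

lemma mpow_nonneg: "u < N \<Longrightarrow> v < N \<Longrightarrow> mpow N P t u v \<ge> 0"
proof (induction t arbitrary: v)
  case 0 then show ?case by simp
next
  case (Suc t) then show ?case by (auto intro!: sum_nonneg mult_nonneg_nonneg P_nonneg)
qed

lemma mpow_add: "v < N \<Longrightarrow> mpow N P (a + b) u v = (\<Sum>x<N. mpow N P a u x * mpow N P b x v)"
proof (induction b arbitrary: v)
  case 0 then show ?case by (simp add: sum_delta_right)
next
  case (Suc b)
  have "mpow N P (a + Suc b) u v = (\<Sum>w<N. (\<Sum>x<N. mpow N P a u x * mpow N P b x w) * P w v)"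
    by (simp add: Suc.IH)
  also have "\<dots> = (\<Sum>x<N. \<Sum>w<N. mpow N P a u x * mpow N P b x w * P w v)"
    by (rule sum_swap_mult)
  also have "\<dots> = (\<Sum>x<N. mpow N P a u x * (\<Sum>w<N. mpow N P b x w * P w v))"
    by (simp add: sum_distrib_left mult.assoc)
  finally show ?case by simp
qed

lemma mpow_row: "u < N \<Longrightarrow> (\<Sum>v<N. mpow N P t u v) = 1"
proof (induction t)
  case 0 then show ?case by simp
next
  case (Suc t)
  have "(\<Sum>v<N. mpow N P (Suc t) u v) = (\<Sum>v<N. \<Sum>w<N. mpow N P t u w * P w v)"
    by simp
  also have "\<dots> = (\<Sum>w<N. \<Sum>v<N. mpow N P t u w * P w v)" by (rule sum.swap)
  also have "\<dots> = (\<Sum>w<N. mpow N P t u w * (\<Sum>v<N. P w v))"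
    by (simp add: sum_distrib_left)
  also have "\<dots> = (\<Sum>w<N. mpow N P t u w)" by (intro sum.cong refl) (simp add: P_row)
  finally show ?case using Suc by simp
qed

lemma mpow_le1: "u < N \<Longrightarrow> v < N \<Longrightarrow> mpow N P t u v \<le> 1"
proof -
  assume a: "u < N" "v < N"
  have "mpow N P t u v \<le> (\<Sum>v<N. mpow N P t u v)"
    by (rule member_le_sum) (use a mpow_nonneg in auto)
  then show ?thesis using mpow_row a by simp
qed

lemma mpow_stat: "v < N \<Longrightarrow> (\<Sum>u<N. \<pi> u * mpow N P t u v) = \<pi> v"
proof (induction t arbitrary: v)
  case 0 then show ?case by (simp add: sum_delta_right)
next
  case (Suc t)
  have "(\<Sum>u<N. \<pi> u * mpow N P (Suc t) u v) = (\<Sum>u<N. \<Sum>w<N. \<pi> u * mpow N P t u w * P w v)"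
    by (simp add: sum_distrib_left mult.assoc)
  also have "\<dots> = (\<Sum>w<N. (\<Sum>u<N. \<pi> u * mpow N P t u w) * P w v)"
    by (rule sum_swap_mult[symmetric])
  also have "\<dots> = (\<Sum>w<N. \<pi> w * P w v)" by (intro sum.cong refl) (simp add: Suc.IH)
  finally show ?case using pi_stat Suc by simp
qed

lemma mpow_rev: "u < N \<Longrightarrow> w < N \<Longrightarrow> \<pi> u * mpow N P t u w = \<pi> w * mpow N P t w u"
proof (induction t arbitrary: w)
  case 0 then show ?case by simp
next
  case (Suc t)
  have "\<pi> u * mpow N P (Suc t) u w = (\<Sum>x<N. (\<pi> u * mpow N P t u x) * P x w)"
    by (simp add: sum_distrib_left mult.assoc)
  also have "\<dots> = (\<Sum>x<N. mpow N P t x u * (\<pi> w * P w x))"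
    by (intro sum.cong refl) (simp add: Suc.IH Suc.prems P_rev)
  also have "\<dots> = \<pi> w * (\<Sum>x<N. P w x * mpow N P t x u)"
    by (simp add: sum_distrib_left mult_ac)
  also have "\<dots> = \<pi> w * (\<Sum>x<N. mpow N P (Suc 0) w x * mpow N P t x u)"
    by (simp only: mpow_one[OF Suc.prems(2)])
  also have "\<dots> = \<pi> w * mpow N P (Suc 0 + t) w u" by (simp only: mpow_add[OF Suc.prems(1)])
  finally show ?case by simp
qed

lemma mpow_pos_add:
  assumes "u < N" "x < N" "v < N" "mpow N P a u x > 0" "mpow N P b x v > 0"
  shows "mpow N P (a + b) u v > 0"
proof -
  have "0 < mpow N P a u x * mpow N P b x v" using assms by simp
  also have "\<dots> \<le> (\<Sum>y<N. mpow N P a u y * mpow N P b y v)"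
    by (rule member_le_sum) (use assms mpow_nonneg in auto)
  finally show ?thesis using mpow_add assms by simp
qed

text \<open>Irreducibility makes the stationary distribution strictly positive.\<close>

lemma pi_pos: "v < N \<Longrightarrow> \<pi> v > 0"
proof -
  assume v: "v < N"
  have "\<exists>x<N. \<pi> x > 0"
  proof (rule ccontr)
    assume "\<not> ?thesis"
    then have "(\<Sum>v<N. \<pi> v) \<le> 0" by (intro sum_nonpos) auto
    then show False using pi_sum by simp
  qed
  then obtain x where x: "x < N" "\<pi> x > 0" by blast
  obtain t where t: "mpow N P t x v > 0"
    using ergodic x v unfolding ergodic_chain_def irreducible_chain_def by blast
  have "0 < \<pi> x * mpow N P t x v" using x t by simp
  also have "\<dots> \<le> (\<Sum>u<N. \<pi> u * mpow N P t u v)"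
    by (rule member_le_sum) (use x pi_nonneg mpow_nonneg v in auto)
  finally show ?thesis using mpow_stat v by simp
qed

lemma pi_min_le: "u < N \<Longrightarrow> pi_min N \<pi> \<le> \<pi> u"
  unfolding pi_min_def by (rule Min_le) auto

lemma pi_min_pos: "0 < N \<Longrightarrow> pi_min N \<pi> > 0"
proof -
  assume "0 < N"
  then have "pi_min N \<pi> \<in> \<pi> ` {..<N}" unfolding pi_min_def by (intro Min_in) auto
  then show ?thesis using pi_pos by auto
qed

text \<open>With positive stationary weights, reversibility makes the support of P symmetric.\<close>

lemma P_pos_sym: "u < N \<Longrightarrow> v < N \<Longrightarrow> P u v > 0 \<Longrightarrow> P v u > 0"
proof -
  assume u: "u < N" and v: "v < N" and "P u v > 0"
  then have "\<pi> u * P u v > 0" using pi_pos[OF u] by simp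
  then have "\<pi> v * P v u > 0" using P_rev[OF u v] by simp
  then show "P v u > 0" using pi_pos[OF v] by (simp add: zero_less_mult_iff)
qed

end

section \<open>Primitivity: some power of P is entrywise positive\<close>

context reversible_ergodic_chain begin

text \<open>Aperiodicity at x forces a return time of odd length.\<close>

lemma odd_return: assumes x: "x < N" shows "\<exists>q. odd q \<and> mpow N P q x x > 0"
proof (rule ccontr)
  assume "\<not> ?thesis"
  then have "(2::nat) dvd Gcd {t::nat. t \<ge> 1 \<and> mpow N P t x x > 0}"
    by (intro Gcd_greatest) auto
  moreover have "Gcd {t::nat. t \<ge> 1 \<and> mpow N P t x x > 0} = 1"
    using ergodic x unfolding ergodic_chain_def aperiodic_chain_def by blast
  ultimately show False by simp
qed

text \<open>By reversibility the chain can always step to a neighbour and back.\<close>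

lemma two_step_return: assumes x: "x < N" shows "mpow N P 2 x x > 0"
proof -
  obtain y where y: "y < N" "P x y > 0" using ex_successor[OF x] by blast
  have "P y x > 0" by (rule P_pos_sym[OF x y])
  have "mpow N P (Suc 0 + Suc 0) x x > 0"
    by (rule mpow_pos_add[OF x y(1) x]) (use y \<open>P y x > 0\<close> x mpow_one in auto)
  then show ?thesis by (simp add: numeral_2_eq_2)
qed

lemma return_plus_even:
  assumes x: "x < N" and pos: "mpow N P q x x > 0"
  shows "mpow N P (q + 2 * k) x x > 0"
proof (induction k)
  case 0 then show ?case using pos by simp
next
  case (Suc k)
  have "mpow N P (q + 2 * k + 2) x x > 0" by (rule mpow_pos_add[OF x x x Suc two_step_return[OF x]])
  then show ?case by (simp add: algebra_simps)
qed

text \<open>Combining an odd and an even return time, every long enough time is a return time.\<close>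

lemma eventually_return: assumes x: "x < N" shows "\<exists>q. \<forall>m\<ge>q. mpow N P m x x > 0"
proof -
  obtain q where q: "odd q" "mpow N P q x x > 0" using odd_return[OF x] by blast
  have "mpow N P m x x > 0" if m: "m \<ge> q" for m
  proof (cases "even m")
    case True
    then have "\<exists>k. m = 2 + 2 * k" using m q(1) by presburger
    then obtain k where "m = 2 + 2 * k" by blast
    then show ?thesis using return_plus_even[OF x two_step_return[OF x]] by simp
  next
    case False
    then have "\<exists>k. m = q + 2 * k" using m q(1) by presburger
    then obtain k where "m = q + 2 * k" by blast
    then show ?thesis using return_plus_even[OF x q(2)] by simp
  qed
  then show ?thesis by blast
qed

lemma primitive: "\<exists>R. \<forall>u<N. \<forall>v<N. mpow N P R u v > 0"
proof -
  have "\<forall>u. \<exists>q. u < N \<longrightarrow> (\<forall>m\<ge>q. mpow N P m u u > 0)" using eventually_return by blast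
  then obtain Q where Q: "\<And>u m. u < N \<Longrightarrow> m \<ge> Q u \<Longrightarrow> mpow N P m u u > 0"
    by (metis choice)
  have "\<forall>u v. \<exists>t. u < N \<longrightarrow> v < N \<longrightarrow> mpow N P t u v > 0"
    using ergodic unfolding ergodic_chain_def irreducible_chain_def by blast
  then obtain T where T: "\<And>u v. u < N \<Longrightarrow> v < N \<Longrightarrow> mpow N P (T u v) u v > 0"
    by metis
  define R where "R = (\<Sum>u<N. Q u) + (\<Sum>u<N. \<Sum>v<N. T u v)"
  have "mpow N P R u v > 0" if u: "u < N" and v: "v < N" for u v
  proof -
    have "Q u \<le> (\<Sum>u<N. Q u)" by (rule member_le_sum) (use u in auto)
    moreover have "T u v \<le> (\<Sum>v<N. T u v)" by (rule member_le_sum) (use v in auto)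
    moreover have "(\<Sum>v<N. T u v) \<le> (\<Sum>u<N. \<Sum>v<N. T u v)"
      by (rule member_le_sum[where f = "\<lambda>u. \<Sum>v<N. T u v"]) (use u in auto)
    ultimately have le: "Q u \<le> R - T u v" "T u v \<le> R" unfolding R_def by linarith+
    have "mpow N P ((R - T u v) + T u v) u v > 0"
      by (rule mpow_pos_add[OF u u v Q[OF u le(1)] T[OF u v]])
    then show ?thesis using le by simp
  qed
  then show ?thesis by blast
qed

end

section \<open>Distance to stationarity and the mixing rate\<close>

lemma l1_contraction:
  fixes M :: "nat \<Rightarrow> nat \<Rightarrow> real" and \<mu> \<rho> :: "nat \<Rightarrow> real"
  assumes M: "\<forall>x<N. \<forall>y<N. M x y \<ge> c * \<rho> y" and M_row: "\<forall>x<N. (\<Sum>y<N. M x y) = 1"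
    and mu0: "(\<Sum>x<N. \<mu> x) = 0" and rho1: "(\<Sum>y<N. \<rho> y) = 1"
  shows "(\<Sum>y<N. \<bar>\<Sum>x<N. \<mu> x * M x y\<bar>) \<le> (1 - c) * (\<Sum>x<N. \<bar>\<mu> x\<bar>)"
proof -
  have shift: "(\<Sum>x<N. \<mu> x * M x y) = (\<Sum>x<N. \<mu> x * (M x y - c * \<rho> y))" for y
  proof -
    have "(\<Sum>x<N. \<mu> x * (c * \<rho> y)) = 0" using mu0 by (simp add: sum_distrib_right[symmetric])
    then show ?thesis by (simp add: right_diff_distrib sum_subtractf)
  qed
  have "(\<Sum>y<N. \<bar>\<Sum>x<N. \<mu> x * M x y\<bar>) \<le> (\<Sum>y<N. \<Sum>x<N. \<bar>\<mu> x\<bar> * (M x y - c * \<rho> y))"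
  proof (rule sum_mono)
    fix y assume y: "y \<in> {..<N}"
    have "\<bar>\<Sum>x<N. \<mu> x * M x y\<bar> \<le> (\<Sum>x<N. \<bar>\<mu> x * (M x y - c * \<rho> y)\<bar>)"
      unfolding shift by (rule sum_abs)
    also have "\<dots> = (\<Sum>x<N. \<bar>\<mu> x\<bar> * (M x y - c * \<rho> y))"
      using M y by (intro sum.cong refl) (auto simp: abs_mult)
    finally show "\<bar>\<Sum>x<N. \<mu> x * M x y\<bar> \<le> (\<Sum>x<N. \<bar>\<mu> x\<bar> * (M x y - c * \<rho> y))" .
  qed
  also have "\<dots> = (\<Sum>x<N. \<Sum>y<N. \<bar>\<mu> x\<bar> * (M x y - c * \<rho> y))" by (rule sum.swap)
  also have "\<dots> = (\<Sum>x<N. \<bar>\<mu> x\<bar> * ((\<Sum>y<N. M x y) - c * (\<Sum>y<N. \<rho> y)))"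
    by (simp add: sum_distrib_left sum_subtractf right_diff_distrib)
  also have "\<dots> = (1 - c) * (\<Sum>x<N. \<bar>\<mu> x\<bar>)"
    using M_row rho1 by (simp add: sum_distrib_left mult.commute)
  finally show ?thesis .
qed

context reversible_ergodic_chain begin

definition dev :: "nat \<Rightarrow> nat \<Rightarrow> nat \<Rightarrow> real" where
  "dev w t u = mpow N P t w u - \<pi> u"

definition row_dist :: "nat \<Rightarrow> nat \<Rightarrow> real" where
  "row_dist w t = (\<Sum>y<N. \<bar>dev w t y\<bar>)"

lemma dTV_row_dist: "dTV N (mpow N P t w) \<pi> = row_dist w t / 2"
  unfolding dTV_def row_dist_def dev_def by simp

lemma dev_sum: "w < N \<Longrightarrow> (\<Sum>u<N. dev w t u) = 0"
  unfolding dev_def by (simp add: sum_subtractf mpow_row pi_sum)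

text \<open>Since pi is stationary, deviations evolve linearly under P.\<close>

lemma dev_add: "y < N \<Longrightarrow> dev w (t + s) y = (\<Sum>x<N. dev w t x * mpow N P s x y)"
  unfolding dev_def by (simp add: left_diff_distrib sum_subtractf mpow_add mpow_stat)

lemma row_dist_nonneg: "row_dist w t \<ge> 0"
  unfolding row_dist_def by (rule sum_nonneg) auto

lemma row_dist_le2: "w < N \<Longrightarrow> row_dist w t \<le> 2"
proof -
  assume w: "w < N"
  have "row_dist w t \<le> (\<Sum>y<N. mpow N P t w y + \<pi> y)"
    unfolding row_dist_def dev_def
    by (rule sum_mono) (use w mpow_nonneg pi_nonneg in \<open>auto simp: abs_le_iff\<close>)
  also have "\<dots> = 2" using w by (simp add: sum.distrib mpow_row pi_sum)
  finally show ?thesis .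
qed

text \<open>Applying a stochastic matrix P^s never increases the distance (contraction with c = 0).\<close>

lemma row_dist_add_le: "w < N \<Longrightarrow> row_dist w (t + s) \<le> row_dist w t"
proof -
  assume w: "w < N"
  have "row_dist w (t + s) = (\<Sum>y<N. \<bar>\<Sum>x<N. dev w t x * mpow N P s x y\<bar>)"
    unfolding row_dist_def by (intro sum.cong refl) (simp add: dev_add)
  also have "\<dots> \<le> (1 - 0) * (\<Sum>x<N. \<bar>dev w t x\<bar>)"
    by (rule l1_contraction[where \<rho> = \<pi>]) (use mpow_nonneg mpow_row dev_sum w pi_sum in auto)
  finally show ?thesis by (simp add: row_dist_def)
qed

lemma row_dist_mono: "w < N \<Longrightarrow> t \<le> t' \<Longrightarrow> row_dist w t' \<le> row_dist w t"
  using row_dist_add_le[of w t "t' - t"] by simp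

lemma row_dist_submult:
  assumes w: "w < N" and a: "\<forall>x<N. row_dist x t \<le> a"
  shows "row_dist w (s + t) \<le> a * row_dist w s"
proof -
  have expand: "dev w (s + t) y = (\<Sum>x<N. dev w s x * dev x t y)" if y: "y < N" for y
  proof -
    have "(\<Sum>x<N. dev w s x * \<pi> y) = 0" using dev_sum[OF w] by (simp flip: sum_distrib_right)
    then show ?thesis using dev_add[OF y, of w s t]
      by (simp add: dev_def[where t = t and u = y] right_diff_distrib sum_subtractf)
  qed
  have "row_dist w (s + t) \<le> (\<Sum>y<N. \<Sum>x<N. \<bar>dev w s x\<bar> * \<bar>dev x t y\<bar>)"
    unfolding row_dist_def
  proof (rule sum_mono)
    fix y assume "y \<in> {..<N}"
    then show "\<bar>dev w (s + t) y\<bar> \<le> (\<Sum>x<N. \<bar>dev w s x\<bar> * \<bar>dev x t y\<bar>)"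
      using expand sum_abs[of "\<lambda>x. dev w s x * dev x t y" "{..<N}"] by (simp add: abs_mult)
  qed
  also have "\<dots> = (\<Sum>x<N. \<bar>dev w s x\<bar> * row_dist x t)"
    by (subst sum.swap) (simp add: row_dist_def sum_distrib_left)
  also have "\<dots> \<le> (\<Sum>x<N. \<bar>dev w s x\<bar> * a)"
    using a by (intro sum_mono mult_left_mono) auto
  also have "\<dots> = a * row_dist w s" unfolding row_dist_def by (simp add: sum_distrib_left mult.commute)
  finally show ?thesis .
qed

text \<open>Convergence theorem: as P^R is entrywise positive, every R steps contract the
  distance by a fixed factor; in particular the mixing time is attained.\<close>

lemma eventually_mixed: assumes w: "w < N" shows "\<exists>t. dTV N (mpow N P t w) \<pi> \<le> 1/4"
proof -
  obtain R where R: "\<And>u v. u < N \<Longrightarrow> v < N \<Longrightarrow> mpow N P R u v > 0" using primitive by blast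
  define \<epsilon> where "\<epsilon> = Min ((\<lambda>(u, v). mpow N P R u v) ` ({..<N} \<times> {..<N}))"
  have eps_le: "\<epsilon> \<le> mpow N P R u v" if "u < N" "v < N" for u v
    unfolding \<epsilon>_def by (rule Min_le) (use that in force)+
  have eps_pos: "\<epsilon> > 0"
  proof -
    have "\<epsilon> \<in> (\<lambda>(u, v). mpow N P R u v) ` ({..<N} \<times> {..<N})"
      unfolding \<epsilon>_def by (rule Min_in) (use w in auto)
    then show ?thesis using R by auto
  qed
  have eps_le1: "\<epsilon> \<le> 1" using eps_le[OF w w] mpow_le1[OF w w, of R] by simp
  have doeblin: "\<forall>x<N. \<forall>y<N. mpow N P R x y \<ge> \<epsilon> * \<pi> y"
  proof (intro allI impI)
    fix x y assume "x < N" "y < N"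
    then have "\<epsilon> * \<pi> y \<le> \<epsilon> * 1" using pi_le1 eps_pos by (intro mult_left_mono) auto
    then show "mpow N P R x y \<ge> \<epsilon> * \<pi> y" using eps_le[OF \<open>x < N\<close> \<open>y < N\<close>] by simp
  qed
  have geometric: "row_dist w (k * R) \<le> (1 - \<epsilon>) ^ k * 2" for k
  proof (induction k)
    case 0 then show ?case using row_dist_le2[OF w] by simp
  next
    case (Suc k)
    have "row_dist w (k * R + R) = (\<Sum>y<N. \<bar>\<Sum>x<N. dev w (k * R) x * mpow N P R x y\<bar>)"
      unfolding row_dist_def by (intro sum.cong refl) (simp add: dev_add)
    also have "\<dots> \<le> (1 - \<epsilon>) * row_dist w (k * R)"
      unfolding row_dist_def
      by (rule l1_contraction[where \<rho> = \<pi>]) (use doeblin mpow_row dev_sum w pi_sum in auto)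
    also have "\<dots> \<le> (1 - \<epsilon>) * ((1 - \<epsilon>) ^ k * 2)" using Suc eps_le1 by (intro mult_left_mono) auto
    finally show ?case by (simp add: add.commute)
  qed
  obtain k where k: "(1 - \<epsilon>) ^ k < 1/4" using real_arch_pow_inv[of "1/4" "1 - \<epsilon>"] eps_pos by auto
  have "dTV N (mpow N P (k * R) w) \<pi> \<le> 1/4" using geometric[of k] k by (simp add: dTV_row_dist)
  then show ?thesis by blast
qed

abbreviation "tstar \<equiv> mixing_rate N P \<pi>"

lemma row_dist_tstar: assumes x: "x < N" shows "row_dist x tstar \<le> 1/2"
proof -
  let ?L = "LEAST t. dTV N (mpow N P t x) \<pi> \<le> 1/4"
  have "dTV N (mpow N P ?L x) \<pi> \<le> 1/4" by (rule LeastI_ex) (rule eventually_mixed[OF x])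
  then have "row_dist x ?L \<le> 1/2" by (simp add: dTV_row_dist)
  moreover have "?L \<le> tstar" unfolding mixing_rate_def mixing_time_def
    by (rule Max_ge) (use x in auto)
  ultimately show ?thesis using row_dist_mono[OF x] by (meson order_trans)
qed

end

text \<open>A nonnegative sequence bounded by 2 that halves every tau steps and is at most 1/2
  from time tau on has partial sums at most 3 tau: the tail from tau on is at most tau.\<close>

lemma halving_tail_sum:
  fixes f :: "nat \<Rightarrow> real" and \<tau> :: nat
  assumes "\<tau> > 0" and half: "\<And>s. s \<ge> \<tau> \<Longrightarrow> f s \<le> 1/2"
    and halving: "\<And>s. f (s + \<tau>) \<le> f s / 2"
  shows "(\<Sum>s\<in>{\<tau>..<T}. f s) \<le> real \<tau>"
proof (induction T rule: less_induct)
  case (less T)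
  have first_block: "(\<Sum>s\<in>{\<tau>..<T'}. f s) \<le> real \<tau> / 2" if "T' \<le> 2 * \<tau>" for T'
  proof -
    have "(\<Sum>s\<in>{\<tau>..<T'}. f s) \<le> real (card {\<tau>..<T'}) * (1/2)"
      by (rule sum_bounded_above) (use half in auto)
    also have "\<dots> \<le> real \<tau> / 2" using that by simp
    finally show ?thesis .
  qed
  show ?case
  proof (cases "T \<le> 2 * \<tau>")
    case True then show ?thesis using first_block[OF True] by simp
  next
    case False
    have "(\<Sum>s\<in>{\<tau>..<T}. f s) = (\<Sum>s\<in>{\<tau>..<2*\<tau>}. f s) + (\<Sum>s\<in>{2*\<tau>..<T}. f s)"
      using False by (intro sum.atLeastLessThan_concat[symmetric]) auto
    also have "(\<Sum>s\<in>{2*\<tau>..<T}. f s) = (\<Sum>s\<in>{\<tau>..<T-\<tau>}. f (s + \<tau>))"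
    proof -
      have "{2*\<tau>..<T} = {\<tau>+\<tau>..<(T-\<tau>)+\<tau>}" using False by auto
      then show ?thesis by (simp add: sum.shift_bounds_nat_ivl)
    qed
    also have "\<dots> \<le> (\<Sum>s\<in>{\<tau>..<T-\<tau>}. f s) / 2"
      using sum_mono[of "{\<tau>..<T-\<tau>}" "\<lambda>s. f (s + \<tau>)" "\<lambda>s. f s / 2"] halving
      by (simp add: sum_divide_distrib)
    also have "\<dots> \<le> real \<tau> / 2" using less[of "T - \<tau>"] \<open>\<tau> > 0\<close> False by simp
    finally show ?thesis using first_block[of "2 * \<tau>"] by simp
  qed
qed

lemma halving_sum:
  fixes f :: "nat \<Rightarrow> real" and \<tau> :: nat
  assumes nonneg: "\<And>s. f s \<ge> 0" and le2: "\<And>s. f s \<le> 2"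
    and half: "\<And>s. s \<ge> \<tau> \<Longrightarrow> f s \<le> 1/2" and halving: "\<And>s. f (s + \<tau>) \<le> f s / 2"
  shows "(\<Sum>s<T. f s) \<le> 3 * real \<tau>"
proof (cases "\<tau> = 0")
  case True
  then have "f s = 0" for s using halving[of s] nonneg[of s] by simp
  then show ?thesis by simp
next
  case False
  let ?m = "max T \<tau>"
  have "(\<Sum>s<T. f s) \<le> (\<Sum>s<?m. f s)" by (rule sum_mono2) (use nonneg in auto)
  also have "\<dots> = (\<Sum>s\<in>{0..<\<tau>}. f s) + (\<Sum>s\<in>{\<tau>..<?m}. f s)"
    unfolding lessThan_atLeast0 by (rule sum.atLeastLessThan_concat[symmetric]) auto
  also have "(\<Sum>s\<in>{0..<\<tau>}. f s) \<le> real (card {0..<\<tau>}) * 2"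
    by (rule sum_bounded_above) (use le2 in auto)
  also have "(\<Sum>s\<in>{\<tau>..<?m}. f s) \<le> real \<tau>"
    using False by (intro halving_tail_sum half halving) auto
  finally show ?thesis by simp
qed

context reversible_ergodic_chain begin

lemma row_dist_sum: assumes w: "w < N" shows "(\<Sum>s<T. row_dist w s) \<le> 3 * real tstar"
proof (rule halving_sum)
  show "row_dist w s \<ge> 0" for s by (rule row_dist_nonneg)
  show "row_dist w s \<le> 2" for s by (rule row_dist_le2[OF w])
  show "row_dist w s \<le> 1/2" if "s \<ge> tstar" for s
    using row_dist_mono[OF w that] row_dist_tstar[OF w] by simp
  show "row_dist w (s + tstar) \<le> row_dist w s / 2" for s
    using row_dist_submult[OF w, of tstar "1/2" s] row_dist_tstar by simp
qed

text \<open>Reversibility converts a column deviation into a row deviation: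
  |P^s u w - pi w| = pi w / pi u * |P^s w u - pi u|.\<close>

lemma column_dev_sum: assumes w: "w < N"
  shows "(\<Sum>u<N. \<bar>mpow N P s u w - \<pi> w\<bar>) \<le> \<pi> w / pi_min N \<pi> * row_dist w s"
proof -
  have pm: "pi_min N \<pi> > 0" using pi_min_pos w by simp
  have "\<bar>mpow N P s u w - \<pi> w\<bar> \<le> \<pi> w / pi_min N \<pi> * \<bar>dev w s u\<bar>" if u: "u < N" for u
  proof -
    have pu: "\<pi> u > 0" by (rule pi_pos[OF u])
    have "mpow N P s u w = \<pi> w * mpow N P s w u / \<pi> u"
      using mpow_rev[OF u w, of s] pu by (simp add: field_simps)
    then have "mpow N P s u w - \<pi> w = \<pi> w / \<pi> u * dev w s u"
      unfolding dev_def using pu by (simp add: field_simps)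
    then have "\<bar>mpow N P s u w - \<pi> w\<bar> = \<pi> w / \<pi> u * \<bar>dev w s u\<bar>"
      using pu pi_nonneg[OF w] by (simp add: abs_mult)
    also have "\<dots> \<le> \<pi> w / pi_min N \<pi> * \<bar>dev w s u\<bar>"
      using pi_min_le[OF u] pm pi_nonneg[OF w]
      by (intro mult_right_mono divide_left_mono) auto
    finally show ?thesis .
  qed
  then have "(\<Sum>u<N. \<bar>mpow N P s u w - \<pi> w\<bar>) \<le> (\<Sum>u<N. \<pi> w / pi_min N \<pi> * \<bar>dev w s u\<bar>)"
    by (intro sum_mono) auto
  also have "\<dots> = \<pi> w / pi_min N \<pi> * row_dist w s"
    unfolding row_dist_def by (simp add: sum_distrib_left)
  finally show ?thesis .
qed

end

lemma Icount_Suc0: "Icount \<sigma> v u 0 (Suc n) = Icount \<sigma> v u 0 n + (if \<sigma> v n = u then 1 else 0)"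
proof -
  have "{j. 0 \<le> j \<and> j < Suc n \<and> \<sigma> v j = u}
      = (if \<sigma> v n = u then insert n else id) {j. 0 \<le> j \<and> j < n \<and> \<sigma> v j = u}"
    by (auto simp: less_Suc_eq)
  then show ?thesis unfolding Icount_def by simp
qed

lemma Icount_split: "z \<le> z' \<Longrightarrow> Icount \<sigma> v u 0 z' = Icount \<sigma> v u 0 z + Icount \<sigma> v u z z'"
proof -
  assume zz: "z \<le> z'"
  have "{j. 0 \<le> j \<and> j < z' \<and> \<sigma> v j = u}
      = {j. 0 \<le> j \<and> j < z \<and> \<sigma> v j = u} \<union> {j. z \<le> j \<and> j < z' \<and> \<sigma> v j = u}"
    using zz by auto
  moreover have "card ({j. 0 \<le> j \<and> j < z \<and> \<sigma> v j = u} \<union> {j. z \<le> j \<and> j < z' \<and> \<sigma> v j = u})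
     = card {j. 0 \<le> j \<and> j < z \<and> \<sigma> v j = u} + card {j. z \<le> j \<and> j < z' \<and> \<sigma> v j = u}"
    by (rule card_Un_disjoint) auto
  ultimately show ?thesis unfolding Icount_def by simp
qed

lemma Icount_nonnbr:
  "functional_router N P \<sigma> \<Longrightarrow> v < N \<Longrightarrow> u \<notin> nbrs N P v \<Longrightarrow> Icount \<sigma> v u z z' = 0"
  unfolding Icount_def functional_router_def by auto

lemma Icount_sum0: "functional_router N P \<sigma> \<Longrightarrow> v < N \<Longrightarrow> (\<Sum>u<N. Icount \<sigma> v u 0 n) = n"
proof (induction n)
  case 0 then show ?case by (simp add: Icount_def)
next
  case (Suc n)
  have lt: "\<sigma> v n < N" using Suc.prems unfolding functional_router_def nbrs_def by blast
  have "(\<Sum>u<N. Icount \<sigma> v u 0 (Suc n))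
      = (\<Sum>u<N. Icount \<sigma> v u 0 n) + (\<Sum>u<N. if \<sigma> v n = u then 1 else 0)"
    by (simp add: Icount_Suc0 sum.distrib)
  also have "(\<Sum>u<N. if \<sigma> v n = u then 1 else (0::nat)) = 1" using lt by (subst sum.delta') auto
  finally show ?case using Suc by simp
qed

lemma Icount_sum:
  "functional_router N P \<sigma> \<Longrightarrow> v < N \<Longrightarrow> z \<le> z' \<Longrightarrow> (\<Sum>u<N. Icount \<sigma> v u z z') = z' - z"
proof -
  assume a: "functional_router N P \<sigma>" "v < N" "z \<le> z'"
  have "(\<Sum>u<N. Icount \<sigma> v u 0 z') = (\<Sum>u<N. Icount \<sigma> v u 0 z) + (\<Sum>u<N. Icount \<sigma> v u z z')"
    using a(3) by (simp add: Icount_split sum.distrib)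
  then show ?thesis using Icount_sum0[OF a(1,2)] by simp
qed

section \<open>Discrepancy of billiard sequences\<close>

lemma discrepancy_combine:
  fixes a s p d :: real
  assumes a: "\<bar>a\<bar> \<le> 1" and s: "\<bar>s\<bar> \<le> d - 1" and p: "0 < p" "p \<le> 1"
  shows "\<bar>a * (1 - p) - p * s\<bar> \<le> 1 + (d - 2) * p"
proof -
  have "\<bar>a * (1 - p)\<bar> \<le> 1 - p" using a p by (simp add: abs_mult mult_left_le_one_le)
  moreover have "\<bar>p * s\<bar> \<le> p * (d - 1)" using s p by (simp add: abs_mult mult_left_mono)
  ultimately have "\<bar>a * (1 - p) - p * s\<bar> \<le> (1 - p) + p * (d - 1)" by linarith
  then show ?thesis by (simp add: algebra_simps)
qed

text \<open>The visit counts of every neighbour u stay within distance 1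
  of level n * P v u, which is what makes windows of the sequence balanced.\<close>

locale billiard_vertex =
  fixes N :: nat and P :: "nat \<Rightarrow> nat \<Rightarrow> real" and \<sigma> :: "nat \<Rightarrow> nat \<Rightarrow> nat" and v :: nat
  assumes v: "v < N" and billiard: "billiard_router N P \<sigma>"
    and P_nonneg: "\<And>u. u < N \<Longrightarrow> P v u \<ge> 0" and P_row: "(\<Sum>u<N. P v u) = 1"
begin

abbreviation "nb \<equiv> nbrs N P v"

lemma functional: "functional_router N P \<sigma>"
  using billiard unfolding billiard_router_def by blast

lemma choice_nb: "\<sigma> v n \<in> nb"
  using functional v unfolding functional_router_def by blast

lemma nb_pos: "u \<in> nb \<Longrightarrow> P v u > 0" unfolding nbrs_def by auto

lemma finite_nb: "finite nb" unfolding nbrs_def by auto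

lemma P_sum_nb: "(\<Sum>u\<in>nb. P v u) = 1"
proof -
  have "(\<Sum>u<N. P v u) = (\<Sum>u\<in>nb. P v u)"
    by (rule sum.mono_neutral_right) (use P_nonneg in \<open>auto simp: nbrs_def less_le\<close>)
  then show ?thesis using P_row by simp
qed

lemma P_le1: "u \<in> nb \<Longrightarrow> P v u \<le> 1"
  using member_le_sum[of u nb "P v"] P_sum_nb finite_nb nb_pos by (auto intro: less_imp_le)

definition visits :: "nat \<Rightarrow> nat \<Rightarrow> real" where
  "visits u n = real (Icount \<sigma> v u 0 n)"

definition key :: "nat \<Rightarrow> real" where
  "key n = (visits (\<sigma> v n) n + 1) / P v (\<sigma> v n)"

definition level :: "nat \<Rightarrow> real" where
  "level n = (case n of 0 \<Rightarrow> 0 | Suc m \<Rightarrow> key m)"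

lemma visits_Suc: "visits u (Suc n) = visits u n + (if \<sigma> v n = u then 1 else 0)"
  unfolding visits_def by (simp add: Icount_Suc0)

lemma key_le: "u \<in> nb \<Longrightarrow> key n \<le> (visits u n + 1) / P v u"
  using billiard v unfolding billiard_router_def key_def visits_def by blast

lemma key_nonneg: "key n \<ge> 0"
  unfolding key_def visits_def using nb_pos[OF choice_nb[of n]] by simp

lemma key_mono: "key m \<le> key (Suc m)"
proof (cases "\<sigma> v (Suc m) = \<sigma> v m")
  case True
  have "P v (\<sigma> v m) > 0" using nb_pos choice_nb by blast
  then show ?thesis using True unfolding key_def by (simp add: visits_Suc divide_right_mono)
next
  case False
  then have "key (Suc m) = (visits (\<sigma> v (Suc m)) m + 1) / P v (\<sigma> v (Suc m))"
    unfolding key_def by (simp add: visits_Suc)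
  then show ?thesis using key_le[OF choice_nb[of "Suc m"]] by simp
qed

lemma level_mono: "level n \<le> level (Suc n)"
  by (cases n) (auto simp: level_def key_nonneg key_mono)

lemma visits_upper: "u \<in> nb \<Longrightarrow> visits u n \<le> level n * P v u"
proof (induction n)
  case 0 then show ?case by (simp add: visits_def Icount_def level_def)
next
  case (Suc n)
  have pu: "P v u > 0" using nb_pos Suc.prems by blast
  show ?case
  proof (cases "\<sigma> v n = u")
    case True
    have "level (Suc n) * P v u = visits u n + 1" using True pu unfolding level_def key_def by simp
    then show ?thesis using True by (simp add: visits_Suc)
  next
    case False
    have "level n * P v u \<le> level (Suc n) * P v u" using level_mono pu by (intro mult_right_mono) auto
    then show ?thesis using False Suc by (simp add: visits_Suc)
  qed
qed

lemma visits_lower: "u \<in> nb \<Longrightarrow> level n * P v u \<le> visits u n + 1"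
proof (cases n)
  case 0 then show ?thesis by (simp add: level_def visits_def)
next
  case (Suc m)
  assume u: "u \<in> nb"
  have "key m \<le> (visits u m + 1) / P v u" by (rule key_le[OF u])
  then have "key m * P v u \<le> visits u m + 1" using nb_pos[OF u] by (simp add: pos_le_divide_eq)
  moreover have "visits u m \<le> visits u (Suc m)" by (simp add: visits_Suc)
  ultimately show ?thesis using Suc by (simp add: level_def)
qed

definition slack :: "nat \<Rightarrow> nat \<Rightarrow> nat \<Rightarrow> real" where
  "slack u z z' = (visits u z' - level z' * P v u) - (visits u z - level z * P v u)"

lemma slack_bound: "u \<in> nb \<Longrightarrow> \<bar>slack u z z'\<bar> \<le> 1"
  using visits_upper[of u z] visits_upper[of u z'] visits_lower[of u z] visits_lower[of u z']
  unfolding slack_def abs_le_iff by linarith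

lemma Icount_window:
  "z \<le> z' \<Longrightarrow> real (Icount \<sigma> v u z z') = (level z' - level z) * P v u + slack u z z'"
  using Icount_split[of z z' \<sigma> v u] unfolding slack_def visits_def by (simp add: algebra_simps)

lemma window_length:
  assumes "z \<le> z'" shows "real (z' - z) = (level z' - level z) + (\<Sum>w\<in>nb. slack w z z')"
proof -
  have "real (z' - z) = (\<Sum>w<N. real (Icount \<sigma> v w z z'))"
    using Icount_sum[OF functional v assms] by (metis of_nat_sum)
  also have "\<dots> = (\<Sum>w\<in>nb. real (Icount \<sigma> v w z z'))"
    by (rule sum.mono_neutral_right) (auto simp: Icount_nonnbr[OF functional v] nbrs_def)
  also have "\<dots> = (level z' - level z) * (\<Sum>w\<in>nb. P v w) + (\<Sum>w\<in>nb. slack w z z')"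
    by (simp add: Icount_window[OF assms] sum.distrib sum_distrib_left)
  finally show ?thesis by (simp add: P_sum_nb)
qed

lemma billiard_discrepancy:
  assumes u: "u \<in> nb" and zz: "z \<le> z'"
  shows "\<bar>real (Icount \<sigma> v u z z') - real (z' - z) * P v u\<bar> \<le> 1 + (real (deg N P v) - 2) * P v u"
proof -
  let ?others = "\<Sum>w\<in>nb - {u}. slack w z z'"
  have "(\<Sum>w\<in>nb. slack w z z') = slack u z z' + ?others"
    using u finite_nb by (simp add: sum.remove)
  then have "real (Icount \<sigma> v u z z') - real (z' - z) * P v u
      = slack u z z' * (1 - P v u) - P v u * ?others"
    unfolding Icount_window[OF zz] window_length[OF zz] by (simp add: algebra_simps)
  moreover have "\<bar>?others\<bar> \<le> real (deg N P v) - 1"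
  proof -
    have "\<bar>?others\<bar> \<le> (\<Sum>w\<in>nb - {u}. \<bar>slack w z z'\<bar>)" by (rule sum_abs)
    also have "\<dots> \<le> (\<Sum>w\<in>nb - {u}. 1)" using slack_bound by (intro sum_mono) auto
    also have "\<dots> = real (deg N P v) - 1"
    proof -
      have "0 < card nb" using finite_nb u card_gt_0_iff by blast
      then show ?thesis using u finite_nb unfolding deg_def by (simp add: card_Diff_singleton of_nat_diff)
    qed
    finally show ?thesis .
  qed
  ultimately show ?thesis
    using discrepancy_combine slack_bound[OF u] nb_pos[OF u] P_le1[OF u] by metis
qed

lemma billiard_discrepancy_deg:
  assumes u: "u \<in> nb" and zz: "z \<le> z'"
  shows "\<bar>real (Icount \<sigma> v u z z') - real (z' - z) * P v u\<bar> \<le> real (deg N P v) - 1"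
proof -
  have "card nb > 0" using finite_nb u card_gt_0_iff by blast
  then have "deg N P v \<ge> 1" unfolding deg_def by simp
  moreover have "1 + (real (deg N P v) - 2) * P v u \<le> real (deg N P v) - 1"
  proof (cases "deg N P v = 1")
    case True
    then obtain w where "nb = {w}" unfolding deg_def using card_1_singletonE by blast
    then have "P v u = 1" using u P_sum_nb by simp
    then show ?thesis by simp
  next
    case False
    then have "real (deg N P v) - 2 \<ge> 0" using \<open>deg N P v \<ge> 1\<close> by simp
    then have "(real (deg N P v) - 2) * P v u \<le> real (deg N P v) - 2"
      by (rule mult_left_le[OF P_le1[OF u]])
    then show ?thesis by linarith
  qed
  ultimately show ?thesis using billiard_discrepancy[OF u zz] by linarith
qed

end

section \<open>The router dynamics as a perturbed linear evolution\<close>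

text \<open>sent_total N sigma chi0 t v = chi(0) v + ... + chi(t-1) v is the number of tokens
  v has routed before round t, i.e. the current position in its router sequence.\<close>

definition sent_total :: "nat \<Rightarrow> (nat \<Rightarrow> nat \<Rightarrow> nat) \<Rightarrow> (nat \<Rightarrow> nat) \<Rightarrow> nat \<Rightarrow> nat \<Rightarrow> nat" where
  "sent_total N \<sigma> \<chi>0 t = snd (router_state N \<sigma> \<chi>0 t)"

lemma chi_0: "chi N \<sigma> \<chi>0 0 = \<chi>0" by (simp add: chi_def)

lemma chi_Suc: "chi N \<sigma> \<chi>0 (Suc t) u =
   (\<Sum>v<N. Icount \<sigma> v u (sent_total N \<sigma> \<chi>0 t v) (sent_total N \<sigma> \<chi>0 t v + chi N \<sigma> \<chi>0 t v))"
  by (simp add: chi_def sent_total_def Let_def)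

lemma abs_triple_sum_le:
  "\<bar>\<Sum>i\<in>A. \<Sum>j\<in>B. \<Sum>k\<in>C. (f i j k::real)\<bar> \<le> (\<Sum>i\<in>A. \<Sum>j\<in>B. \<Sum>k\<in>C. \<bar>f i j k\<bar>)"
proof -
  have "\<bar>\<Sum>i\<in>A. \<Sum>j\<in>B. \<Sum>k\<in>C. f i j k\<bar> \<le> (\<Sum>i\<in>A. \<bar>\<Sum>j\<in>B. \<Sum>k\<in>C. f i j k\<bar>)" by (rule sum_abs)
  also have "\<dots> \<le> (\<Sum>i\<in>A. \<Sum>j\<in>B. \<bar>\<Sum>k\<in>C. f i j k\<bar>)" by (intro sum_mono sum_abs)
  also have "\<dots> \<le> (\<Sum>i\<in>A. \<Sum>j\<in>B. \<Sum>k\<in>C. \<bar>f i j k\<bar>)" by (intro sum_mono sum_abs)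
  finally show ?thesis .
qed

locale billiard_chain = reversible_ergodic_chain +
  fixes \<sigma> :: "nat \<Rightarrow> nat \<Rightarrow> nat" and \<chi>0 :: "nat \<Rightarrow> nat"
  assumes billiard: "billiard_router N P \<sigma>"
begin

abbreviation "c \<equiv> chi N \<sigma> \<chi>0"

lemma functional: "functional_router N P \<sigma>"
  using billiard unfolding billiard_router_def by blast

definition rounding :: "nat \<Rightarrow> nat \<Rightarrow> nat \<Rightarrow> real" where
  "rounding t v u = real (Icount \<sigma> v u (sent_total N \<sigma> \<chi>0 t v) (sent_total N \<sigma> \<chi>0 t v + c t v))
     - real (c t v) * P v u"

text \<open>All tokens leave v, so the rounding errors of a vertex cancel.\<close>

lemma rounding_sum: assumes v: "v < N" shows "(\<Sum>u<N. rounding t v u) = 0"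
proof -
  let ?S = "sent_total N \<sigma> \<chi>0 t v"
  have "(\<Sum>u<N. Icount \<sigma> v u ?S (?S + c t v)) = c t v" by (simp add: Icount_sum[OF functional v])
  then have "(\<Sum>u<N. real (Icount \<sigma> v u ?S (?S + c t v))) = real (c t v)" by (metis of_nat_sum)
  then show ?thesis unfolding rounding_def
    by (simp add: sum_subtractf sum_distrib_left[symmetric] P_row v)
qed

lemma rounding_bound: assumes v: "v < N" and u: "u < N"
  shows "\<bar>rounding t v u\<bar> \<le> (if P v u > 0 then real (deg N P v) - 1 else 0)"
proof -
  interpret billiard_vertex N P \<sigma> v
    by unfold_locales (use v billiard P_nonneg P_row in auto)
  show ?thesis
  proof (cases "P v u > 0")
    case True
    then have "u \<in> nbrs N P v" unfolding nbrs_def using u by auto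
    then show ?thesis
      using True billiard_discrepancy_deg[of u "sent_total N \<sigma> \<chi>0 t v" "sent_total N \<sigma> \<chi>0 t v + c t v"]
      unfolding rounding_def by simp
  next
    case False
    then have "u \<notin> nbrs N P v" "P v u = 0" using P_nonneg[OF u] unfolding nbrs_def by auto
    then show ?thesis using Icount_nonnbr[OF functional v] False unfolding rounding_def by simp
  qed
qed

lemma c_Suc: "real (c (Suc t) w) = (\<Sum>v<N. real (c t v) * P v w) + (\<Sum>v<N. rounding t v w)"
  by (simp add: chi_Suc rounding_def sum_subtractf)

lemma mu_Suc: "mu N P \<chi>0 (Suc T) w = (\<Sum>x<N. mu N P \<chi>0 T x * P x w)"
proof -
  have "(\<Sum>x<N. mu N P \<chi>0 T x * P x w) = (\<Sum>v<N. \<Sum>x<N. real (\<chi>0 v) * mpow N P T v x * P x w)"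
    unfolding mu_def by (rule sum_swap_mult)
  then show ?thesis unfolding mu_def by (simp add: sum_distrib_left mult.assoc)
qed

definition accumulated :: "nat \<Rightarrow> nat \<Rightarrow> real" where
  "accumulated T w = (\<Sum>t<T. \<Sum>v<N. \<Sum>u<N. rounding t v u * mpow N P (T - Suc t) u w)"

lemma accumulated_Suc: assumes w: "w < N"
  shows "accumulated (Suc T) w = (\<Sum>x<N. accumulated T x * P x w) + (\<Sum>v<N. rounding T v w)"
proof -
  have "(\<Sum>x<N. accumulated T x * P x w)
      = (\<Sum>t<T. \<Sum>v<N. \<Sum>u<N. \<Sum>x<N. rounding t v u * mpow N P (T - Suc t) u x * P x w)"
    unfolding accumulated_def by (simp only: sum_swap_mult)
  also have "\<dots> = (\<Sum>t<T. \<Sum>v<N. \<Sum>u<N. rounding t v u * mpow N P (Suc T - Suc t) u w)"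
  proof (intro sum.cong refl)
    fix t v u assume t: "t \<in> {..<T}"
    have "(\<Sum>x<N. rounding t v u * mpow N P (T - Suc t) u x * P x w)
        = rounding t v u * mpow N P (Suc (T - Suc t)) u w"
      by (simp add: sum_distrib_left mult.assoc)
    also have "Suc (T - Suc t) = Suc T - Suc t" using t by simp
    finally show "(\<Sum>x<N. rounding t v u * mpow N P (T - Suc t) u x * P x w)
        = rounding t v u * mpow N P (Suc T - Suc t) u w" .
  qed
  moreover have "(\<Sum>v<N. rounding T v w)
      = (\<Sum>v<N. \<Sum>u<N. rounding T v u * mpow N P (Suc T - Suc T) u w)"
    using w by (simp add: sum_delta_right)
  ultimately show ?thesis unfolding accumulated_def by simp
qed

lemma chi_decomposition: "w < N \<Longrightarrow> real (c T w) = mu N P \<chi>0 T w + accumulated T w"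
proof (induction T arbitrary: w)
  case 0 then show ?case by (simp add: chi_0 mu_def accumulated_def sum_delta_right)
next
  case (Suc T)
  have "real (c (Suc T) w)
      = (\<Sum>v<N. (mu N P \<chi>0 T v + accumulated T v) * P v w) + (\<Sum>v<N. rounding T v w)"
    unfolding c_Suc using Suc.IH by simp
  also have "\<dots> = mu N P \<chi>0 (Suc T) w + accumulated (Suc T) w"
    by (simp add: mu_Suc accumulated_Suc Suc.prems distrib_right sum.distrib)
  finally show ?case .
qed

text \<open>Since the rounding errors of each vertex cancel, pi w may be subtracted from the
  propagation weights; this centring is what lets the mixing time enter.\<close>

lemma chi_minus_mu: assumes w: "w < N"
  shows "real (c T w) - mu N P \<chi>0 T w
    = (\<Sum>t<T. \<Sum>v<N. \<Sum>u<N. rounding t v u * (mpow N P (T - Suc t) u w - \<pi> w))"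
proof -
  have "(\<Sum>u<N. rounding t v u * \<pi> w) = 0" if "v < N" for t v
    using rounding_sum[OF that] by (simp flip: sum_distrib_right)
  then show ?thesis
    using chi_decomposition[OF w] unfolding accumulated_def
    by (simp add: right_diff_distrib sum_subtractf)
qed

end

context reversible_ergodic_chain begin

lemma deg_le: "u < N \<Longrightarrow> deg N P u \<le> max_deg N P"
  unfolding max_deg_def by (rule Max_ge) auto

lemma max_deg_ge1: "w < N \<Longrightarrow> real (max_deg N P) \<ge> 1"
proof -
  assume w: "w < N"
  obtain y where "y < N" "P w y > 0" using ex_successor[OF w] by blast
  then have "nbrs N P w \<noteq> {}" unfolding nbrs_def by auto
  moreover have "finite (nbrs N P w)" unfolding nbrs_def by auto
  ultimately have "0 < deg N P w" unfolding deg_def using card_gt_0_iff by blast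
  then show ?thesis using deg_le[OF w] by simp
qed

text \<open>Because the support of P is symmetric, in-neighbourhoods equal out-neighbourhoods;
  hence the rounding errors flowing into u add up to at most Delta (Delta - 1).\<close>

lemma in_nbrs: "u < N \<Longrightarrow> {v \<in> {..<N}. P v u > 0} = nbrs N P u"
  unfolding nbrs_def using P_pos_sym by auto

lemma incoming_bound: assumes u: "u < N"
  shows "(\<Sum>v<N. if P v u > 0 then real (max_deg N P) - 1 else 0)
    \<le> real (max_deg N P) * (real (max_deg N P) - 1)"
proof -
  have "(\<Sum>v<N. if P v u > 0 then real (max_deg N P) - 1 else 0)
      = (\<Sum>v\<in>{v \<in> {..<N}. P v u > 0}. real (max_deg N P) - 1)"
    by (subst sum.inter_filter) simp_all
  also have "\<dots> = real (card {v \<in> {..<N}. P v u > 0}) * (real (max_deg N P) - 1)" by simp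
  also have "\<dots> \<le> real (max_deg N P) * (real (max_deg N P) - 1)"
    using deg_le[OF u] max_deg_ge1[OF u] unfolding in_nbrs[OF u] deg_def
    by (intro mult_right_mono) auto
  finally show ?thesis .
qed

end

context billiard_chain begin

lemma main_bound: assumes w: "w < N"
  shows "\<bar>real (c T w) - mu N P \<chi>0 T w\<bar>
    \<le> 3 * \<pi> w / pi_min N \<pi> * real tstar * real (max_deg N P) * (real (max_deg N P) - 1)"
proof -
  define \<Delta> where "\<Delta> = real (max_deg N P)"
  define e where "e t u = \<bar>mpow N P (T - Suc t) u w - \<pi> w\<bar>" for t u
  define q where "q = \<pi> w / pi_min N \<pi>"
  have d1: "\<Delta> - 1 \<ge> 0" unfolding \<Delta>_def using max_deg_ge1[OF w] by simp
  have q0: "q \<ge> 0" unfolding q_def using pi_nonneg[OF w] pi_min_pos w by simp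
  have incoming: "\<bar>rounding t v u\<bar> \<le> (if P v u > 0 then \<Delta> - 1 else 0)"
    if "v < N" "u < N" for t v u
    using rounding_bound[OF that, of t] deg_le[OF that(1)] unfolding \<Delta>_def by auto
  have "\<bar>real (c T w) - mu N P \<chi>0 T w\<bar>
      \<le> (\<Sum>t<T. \<Sum>v<N. \<Sum>u<N. \<bar>rounding t v u * (mpow N P (T - Suc t) u w - \<pi> w)\<bar>)"
    unfolding chi_minus_mu[OF w] by (rule abs_triple_sum_le)
  also have "\<dots> \<le> (\<Sum>t<T. \<Sum>v<N. \<Sum>u<N. (if P v u > 0 then \<Delta> - 1 else 0) * e t u)"
    unfolding e_def abs_mult by (intro sum_mono mult_right_mono incoming) auto
  also have "\<dots> = (\<Sum>t<T. \<Sum>u<N. (\<Sum>v<N. if P v u > 0 then \<Delta> - 1 else 0) * e t u)"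
    by (rule sum.cong[OF refl]) (rule sum_swap_mult[symmetric])
  also have "\<dots> \<le> (\<Sum>t<T. \<Sum>u<N. (\<Delta> * (\<Delta> - 1)) * e t u)"
    using incoming_bound unfolding e_def \<Delta>_def by (intro sum_mono mult_right_mono) auto
  also have "\<dots> = (\<Delta> * (\<Delta> - 1)) * (\<Sum>t<T. \<Sum>u<N. e t u)" by (simp add: sum_distrib_left)
  also have "\<dots> \<le> (\<Delta> * (\<Delta> - 1)) * (\<Sum>t<T. q * row_dist w (T - Suc t))"
    using d1 \<Delta>_def max_deg_ge1[OF w] unfolding e_def q_def
    by (intro mult_left_mono sum_mono column_dev_sum[OF w]) auto
  also have "(\<Sum>t<T. q * row_dist w (T - Suc t)) = q * (\<Sum>s<T. row_dist w s)"
    by (simp add: sum_distrib_left[symmetric] sum.nat_diff_reindex)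
  also have "(\<Delta> * (\<Delta> - 1)) * (q * (\<Sum>s<T. row_dist w s)) \<le> (\<Delta> * (\<Delta> - 1)) * (q * (3 * real tstar))"
    using d1 q0 row_dist_sum[OF w] \<Delta>_def max_deg_ge1[OF w] by (intro mult_left_mono) auto
  finally show ?thesis unfolding q_def \<Delta>_def by (simp add: algebra_simps)
qed

end

theorem theorem5p3:
  fixes N :: nat and P :: "nat \<Rightarrow> nat \<Rightarrow> real" and \<pi> :: "nat \<Rightarrow> real"
    and \<sigma> :: "nat \<Rightarrow> nat \<Rightarrow> nat" and \<chi>0 :: "nat \<Rightarrow> nat"
  assumes "ergodic_chain N P"
    and "stationary_dist N P \<pi>"
    and "reversible_chain N P \<pi>"
    and "billiard_router N P \<sigma>"
  shows "\<forall>w<N. \<forall>T. \<bar>real (chi N \<sigma> \<chi>0 T w) - mu N P \<chi>0 T w\<bar>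
           \<le> 3 * \<pi> w / pi_min N \<pi> * real (mixing_rate N P \<pi>)
               * real (max_deg N P) * (real (max_deg N P) - 1)"
proof -
  interpret billiard_chain N P \<pi> \<sigma> \<chi>0
    by unfold_locales (use assms in auto)
  show ?thesis using main_bound by blast
qed

end
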